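(* For every function $f:\mathbb{N}\to\mathbb{N}$ and all positive integers $a$ and $d$, the set $\{2^{f(n)}(a+dn)\mid n\in\mathbb{N}\}$ is a sufficient set.
   Context: $\mathbb{N}=\{0,1,2,\dots\}$. Let $T:\mathbb{Z}\to\mathbb{Z}$ be $T(x)=x/2$ if $x$ is even and $T(x)=(3x+1)/2$ if $x$ is odd. The $T$-orbit of $x$ is the sequence $x,T(x),T^2(x),\dots$. Two positive integers $x,y$ merge if there exist nonnegative integers $k,j$ with $T^k(x)=T^j(y)$. A set $S$ of positive integers is sufficient if every positive integer merges with some element of $S$. *)

theory Defs
  imports Main
begin

definition collatzT :: "int \<Rightarrow> int" where
  "collatzT x = (if even x then x div 2 else (3 * x + 1) div 2)"

definition merge :: "int \<Rightarrow> int \<Rightarrow> bool" where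
  "merge x y \<longleftrightarrow> (\<exists>k j :: nat. (collatzT ^^ k) x = (collatzT ^^ j) y)"

definition sufficient :: "int set \<Rightarrow> bool" where
  "sufficient S \<longleftrightarrow> (\<forall>s\<in>S. s > 0) \<and> (\<forall>x::int. x > 0 \<longrightarrow> (\<exists>y\<in>S. merge x y))"

end

theory Submission
  imports Defs "HOL-Number_Theory.Number_Theory"
begin

(* Multiplying by powers of 2 does not affect merging, since T(2z) = z.  Writing
   d = 2^s d' with d' odd, the iterate T^s maps the progression a + d n affinely onto
   b + 3^m d' n (b = T^s a), so it suffices that every x > 0 merges with some member
   of a progression b + D N with D odd.  Writing D = 3^t e with e prime to 6, we call
   a residue r "attainable" for x modulo e if numbers merging with x can be found in
   the class r modulo e with an arbitrarily prescribed class modulo every 3^s. *)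

lemma collatzT_double: "collatzT (2 * z) = z"
  by (simp add: collatzT_def)

lemma collatzT_odd: "odd y \<Longrightarrow> collatzT y = (3 * y + 1) div 2"
  by (simp add: collatzT_def)

lemma collatzT_shift_step:
  "collatzT (y + 2 * q) = collatzT y + (if even y then q else 3 * q)"
  by (auto simp add: collatzT_def elim!: evenE oddE)

(* Iterating: T^s maps the residue class y + 2^s q affinely onto T^s(y) + 3^m q,
   where m is the number of odd steps.  This turns the progression a + d n into
   a progression with odd difference. *)
lemma funpow_collatzT_shift:
  "\<exists>m::nat. \<forall>q. (collatzT ^^ s) (y + 2 ^ s * q) = (collatzT ^^ s) y + 3 ^ m * q"
proof (induction s arbitrary: y)
  case 0
  show ?case by simp
next
  case (Suc s)
  define c :: int where "c = (if even y then 1 else 3)"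
  have step: "collatzT (y + 2 ^ Suc s * q) = collatzT y + 2 ^ s * (c * q)" for q
    using collatzT_shift_step[of y "2 ^ s * q"] by (simp add: c_def mult.assoc)
  obtain m where m: "\<And>q. (collatzT ^^ s) (collatzT y + 2 ^ s * q) = (collatzT ^^ s) (collatzT y) + 3 ^ m * q"
    using Suc.IH by blast
  have "(collatzT ^^ Suc s) (y + 2 ^ Suc s * q) = (collatzT ^^ Suc s) y + (3 ^ m * c) * q" for q
    by (simp only: funpow_Suc_right comp_apply step m mult.assoc)
  moreover have "3 ^ m * c = 3 ^ (if even y then m else Suc m)"
    by (simp add: c_def)
  ultimately show ?case by metis
qed

(* Every positive orbit contains an element prime to 3 (an odd step 3x+1 never
   yields a multiple of 3). *)
lemma exists_iterate_not_dvd3: "x > 0 \<Longrightarrow> \<exists>i. \<not> 3 dvd (collatzT ^^ i) x"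
proof (induction x rule: measure_induct_rule[where f = nat])
  case (less x)
  show ?case
  proof (cases "3 dvd x")
    case False
    then show ?thesis by (intro exI[of _ 0]) simp
  next
    case True
    show ?thesis
    proof (cases "even x")
      case True
      then have "collatzT x = x div 2" "nat (x div 2) < nat x" "x div 2 > 0"
        using less.prems by (auto simp: collatzT_def elim!: evenE)
      then obtain i where "\<not> 3 dvd (collatzT ^^ i) (collatzT x)" using less.IH by metis
      then show ?thesis by (metis funpow_Suc_right comp_apply)
    next
      case False
      then have "2 * collatzT x = 3 * x + 1" by (simp add: collatzT_odd) presburger
      then have "\<not> 3 dvd collatzT x" by presburger
      then show ?thesis by (intro exI[of _ 1]) simp
    qed
  qed
qed

lemma funpow_collatzT_pow2: "(collatzT ^^ k) (2 ^ k * z) = z"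
  by (induction k arbitrary: z) (simp_all add: funpow_Suc_right power_Suc mult.assoc collatzT_double del: funpow.simps)

(* The backward gadget: 2^n u - 1 is mapped in n odd steps to 3^n u - 1.  It converts
   control of a number modulo 3^(n+s) into free control of its preimage modulo 3^s. *)
lemma funpow_collatzT_gadget: "(collatzT ^^ n) (2 ^ n * u - 1) = 3 ^ n * u - 1"
proof (induction n arbitrary: u)
  case 0
  show ?case by simp
next
  case (Suc n)
  have "3 * (2 ^ Suc n * u - 1) + 1 = 2 * (2 ^ n * (3 * u) - 1)"
    by (simp add: algebra_simps)
  then have "collatzT (2 ^ Suc n * u - 1) = 2 ^ n * (3 * u) - 1"
    by (simp add: collatzT_odd)
  then show ?case
    by (simp only: funpow_Suc_right comp_apply Suc.IH) simp
qed

lemma funpow_collatzT_pos: "x > 0 \<Longrightarrow> (collatzT ^^ i) x > 0"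
  by (induction i) (auto simp add: collatzT_def elim!: evenE)

lemma merge_preimage: "merge x z \<Longrightarrow> (collatzT ^^ j) y = z \<Longrightarrow> merge x y"
  unfolding merge_def by (metis funpow_add comp_apply)

lemma merge_pow2: "merge x y \<Longrightarrow> merge x (2 ^ k * y)"
  using merge_preimage funpow_collatzT_pow2 by blast

lemma merge_orbit: "merge x ((collatzT ^^ i) x)"
  unfolding merge_def by (metis funpow_0)

lemma prime_power_decompose:
  fixes p D :: int
  assumes "p > 1" "D > 0"
  obtains t e where "D = p ^ t * e" "\<not> p dvd e" "e > 0"
proof -
  have "\<not> is_unit p" "D \<noteq> 0" using assms by auto
  then obtain e where e: "D = p ^ multiplicity p D * e" "\<not> p dvd e"
    using multiplicity_decompose' by metis
  have "p ^ multiplicity p D > 0" using assms(1) by simp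
  then have "e > 0" using e(1) assms(2) zero_less_mult_pos by metis
  with e show ?thesis using that by blast
qed

lemma not_dvd3_mult: fixes a b :: int shows "\<not> 3 dvd a \<Longrightarrow> \<not> 3 dvd b \<Longrightarrow> \<not> 3 dvd a * b"
  using prime_dvd_mult_iff[of "3::int"] by simp

lemma valuation3_cube:
  fixes g c :: int
  assumes "g - 1 = 3 ^ N * c" "\<not> 3 dvd c" "N \<ge> 1"
  obtains c' where "g ^ 3 - 1 = 3 ^ (N + 1) * c'" "\<not> 3 dvd c'"
proof -
  define h where "h = 3 ^ (N - 1) * c"
  have "(3::int) ^ N = 3 * 3 ^ (N - 1)"
    using assms(3) by (simp flip: power_Suc)
  then have g: "g = 1 + 3 * h" using assms(1) h_def by simp
  have "g ^ 3 - 1 = (g - 1) * (3 * (1 + 3 * h + 3 * h ^ 2))"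
    using g by (simp add: power2_eq_square power3_eq_cube algebra_simps)
  also have "\<dots> = 3 ^ (N + 1) * (c * (1 + 3 * h + 3 * h ^ 2))"
    using assms(1) by (simp add: algebra_simps)
  finally have "g ^ 3 - 1 = 3 ^ (N + 1) * (c * (1 + 3 * h + 3 * h ^ 2))" .
  moreover have "\<not> 3 dvd (1 + 3 * h + 3 * h ^ 2)" by presburger
  ultimately show ?thesis using that assms(2) not_dvd3_mult by blast
qed

lemma valuation3_pow3:
  fixes g c :: int
  assumes "g - 1 = 3 ^ N * c" "\<not> 3 dvd c" "N \<ge> 1"
  shows "\<exists>c'. g ^ (3 ^ s) - 1 = 3 ^ (N + s) * c' \<and> \<not> 3 dvd c'"
proof (induction s)
  case 0
  show ?case using assms by auto
next
  case (Suc s)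
  then obtain c' where c': "g ^ (3 ^ s) - 1 = 3 ^ (N + s) * c'" "\<not> 3 dvd c'" by blast
  obtain c'' where "(g ^ (3 ^ s)) ^ 3 - 1 = 3 ^ (N + s + 1) * c''" "\<not> 3 dvd c''"
    using valuation3_cube[OF c'] assms(3) by auto
  moreover have "(g ^ (3 ^ s)) ^ 3 = g ^ (3 ^ Suc s)"
    by (simp add: power_mult[symmetric] mult.commute)
  ultimately show ?case by auto
qed

lemma power_cong_linear:
  fixes g :: int
  assumes "3 ^ N dvd g - 1" "N \<ge> 1"
  shows "[g ^ i = 1 + int i * (g - 1)] (mod 3 ^ (N + 1))"
proof (induction i)
  case 0
  show ?case by simp
next
  case (Suc i)
  obtain k where k: "g - 1 = 3 ^ N * k" using assms(1) by (auto elim: dvdE)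
  have "N + N = (N + 1) + (N - 1)" using assms(2) by arith
  then have "(3::int) ^ N * 3 ^ N = 3 ^ (N + 1) * 3 ^ (N - 1)"
    by (metis power_add)
  then have "(g - 1) ^ 2 = 3 ^ (N + 1) * (3 ^ (N - 1) * k ^ 2)"
    using k by (simp add: power2_eq_square algebra_simps)
  then have sq: "[int i * (g - 1) ^ 2 = 0] (mod 3 ^ (N + 1))"
    by (simp add: cong_0_iff)
  have "[g ^ i * g = (1 + int i * (g - 1)) * g] (mod 3 ^ (N + 1))"
    using Suc by (simp add: cong_mult)
  moreover have "(1 + int i * (g - 1)) * g = (1 + int (Suc i) * (g - 1)) + int i * (g - 1) ^ 2"
    by (simp add: power2_eq_square algebra_simps)
  moreover have "[(1 + int (Suc i) * (g - 1)) + int i * (g - 1) ^ 2 = 1 + int (Suc i) * (g - 1)] (mod 3 ^ (N + 1))"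
    using cong_add[OF cong_refl sq] by simp
  ultimately show ?case by (metis cong_trans power_Suc2)
qed

lemma exists_dvd3_diff: fixes z w :: int assumes "\<not> 3 dvd z" shows "\<exists>i::nat. 3 dvd w - int i * z"
proof -
  have "3 dvd w - int 0 * z \<or> 3 dvd w - int 1 * z \<or> 3 dvd w - int 2 * z"
    using assms by presburger
  then show ?thesis by blast
qed

(* Proof by
   induction on s: the correction factor is g^(3^s i) with i in {0,1,2}. *)
lemma powers_hit_residues:
  fixes g c X Y :: int
  assumes g: "g - 1 = 3 ^ N * c" "\<not> 3 dvd c" "N \<ge> 1"
    and X: "\<not> 3 dvd X" "[X = Y] (mod 3 ^ N)"
  shows "\<exists>j. [g ^ j * X = Y] (mod 3 ^ (N + s))"
proof (induction s)
  case 0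
  show ?case using X(2) by (intro exI[of _ 0]) simp
next
  case (Suc s)
  then obtain j where "[g ^ j * X = Y] (mod 3 ^ (N + s))" by blast
  then obtain w where w: "Y - g ^ j * X = 3 ^ (N + s) * w"
    by (metis cong_iff_dvd_diff cong_sym dvdE)
  define G where "G = g ^ (3 ^ s)"
  obtain cs where cs: "G - 1 = 3 ^ (N + s) * cs" "\<not> 3 dvd cs"
    using valuation3_pow3[OF g] G_def by blast
  have "3 dvd g - 1" using g(1,3) by (simp add: dvd_power)
  then have "\<not> 3 dvd g" by presburger
  then have "\<not> 3 dvd g ^ j" using prime_dvd_power[of "3::int" g j] by auto
  then have "\<not> 3 dvd cs * (g ^ j * X)" using not_dvd3_mult cs(2) X(1) by blast
  then obtain i where "3 dvd w - int i * (cs * (g ^ j * X))" using exists_dvd3_diff by blast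
  then obtain r where r: "w - int i * (cs * (g ^ j * X)) = 3 * r" by (auto elim: dvdE)
  have "[G ^ i = 1 + int i * (G - 1)] (mod 3 ^ (N + s + 1))"
    using power_cong_linear[of "N + s" G i] cs(1) g(3) by simp
  then have "[g ^ j * X * G ^ i = g ^ j * X * (1 + int i * (G - 1))] (mod 3 ^ (N + s + 1))"
    by (simp add: cong_mult)
  moreover have "Y - g ^ j * X * (1 + int i * (G - 1)) = 3 ^ (N + s + 1) * r"
    using w cs(1) r by (simp add: algebra_simps)
  then have "[g ^ j * X * (1 + int i * (G - 1)) = Y] (mod 3 ^ (N + s + 1))"
    by (metis cong_iff_dvd_diff cong_sym dvd_triv_left)
  moreover have "g ^ j * X * G ^ i = g ^ (j + 3 ^ s * i) * X"
    by (simp add: G_def power_add flip: power_mult)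
  ultimately have "[g ^ (j + 3 ^ s * i) * X = Y] (mod 3 ^ (N + Suc s))"
    using cong_trans by fastforce
  then show ?case by blast
qed

lemma euler_theorem_int:
  fixes e :: int assumes "e > 0" "coprime (int a) e"
  shows "[int a ^ totient (nat e) = 1] (mod e)"
proof -
  have "coprime (int a) (int (nat e))" using assms by simp
  then have "coprime a (nat e)" by (simp only: coprime_int_iff)
  then have "[int (a ^ totient (nat e)) = int 1] (mod int (nat e))"
    using euler_theorem cong_int_iff by blast
  then show ?thesis using assms(1) by simp
qed

definition attainable :: "int \<Rightarrow> int \<Rightarrow> int \<Rightarrow> bool" where
  "attainable x e r \<longleftrightarrow>
     (\<forall>s::nat. \<forall>\<sigma>. \<exists>y. y > 0 \<and> merge x y \<and> [y = r] (mod e) \<and> [y = \<sigma>] (mod 3 ^ s))"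

lemma attainable_cong: "attainable x e r \<Longrightarrow> [r = r'] (mod e) \<Longrightarrow> attainable x e r'"
  unfolding attainable_def by (blast intro: cong_trans)

(* Doubling: if y merges with x, so does 2y, and doubling is invertible modulo 3^s. *)
lemma inverse_of_2_mod_pow3: "\<exists>h::int. [2 * h = 1] (mod 3 ^ s)"
  by (intro cong_solve_coprime_int) simp

lemma attainable_double:
  assumes "attainable x e r" shows "attainable x e (2 * r)"
  unfolding attainable_def
proof (intro allI)
  fix s :: nat and \<sigma> :: int
  obtain h :: int where h: "[2 * h = 1] (mod 3 ^ s)" using inverse_of_2_mod_pow3 by blast
  obtain y where y: "y > 0" "merge x y" "[y = r] (mod e)" "[y = h * \<sigma>] (mod 3 ^ s)"
    using assms unfolding attainable_def by blast
  have "merge x (2 * y)" using merge_pow2[OF y(2), of 1] by simp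
  moreover have "[2 * y = 2 * r] (mod e)" using y(3) by (simp add: cong_mult)
  moreover have "[2 * y = \<sigma>] (mod 3 ^ s)"
  proof -
    have "[2 * y = (2 * h) * \<sigma>] (mod 3 ^ s)" using cong_mult[OF cong_refl y(4), of 2] by (simp add: mult.assoc)
    also have "[(2 * h) * \<sigma> = 1 * \<sigma>] (mod 3 ^ s)" by (rule cong_mult[OF h cong_refl])
    finally show ?thesis by simp
  qed
  ultimately show "\<exists>y. y > 0 \<and> merge x y \<and> [y = 2 * r] (mod e) \<and> [y = \<sigma>] (mod 3 ^ s)"
    using y(1) by (intro exI[of _ "2 * y"]) simp
qed

lemma attainable_pow2: "attainable x e r \<Longrightarrow> attainable x e (2 ^ k * r)"
  by (induction k) (auto simp add: mult.assoc dest: attainable_double)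

(* The freedom modulo 3^(s+1) makes
   2y - 1 divisible by 3 with prescribed quotient modulo 3^s, so attainability passes
   from r to (2r - 1)/3 whenever 3 is invertible modulo e. *)
lemma collatzT_odd_preimage: "3 * y' = 2 * y - 1 \<Longrightarrow> collatzT y' = y"
  unfolding collatzT_def by presburger

lemma attainable_odd_preimage:
  assumes "attainable x e r" "[3 * r' = 2 * r - 1] (mod e)" "coprime 3 e"
  shows "attainable x e r'"
  unfolding attainable_def
proof (intro allI)
  fix s :: nat and \<sigma> :: int
  obtain h :: int where h: "[2 * h = 1] (mod 3 ^ (s + 1))" using inverse_of_2_mod_pow3 by blast
  obtain y where y: "y > 0" "merge x y" "[y = r] (mod e)" "[y = h * (3 * \<sigma> + 1)] (mod 3 ^ (s + 1))"
    using assms(1) unfolding attainable_def by blast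
  have "[2 * y = (2 * h) * (3 * \<sigma> + 1)] (mod 3 ^ (s + 1))"
    using cong_mult[OF cong_refl y(4), of 2] by (simp add: mult.assoc)
  also have "[(2 * h) * (3 * \<sigma> + 1) = 1 * (3 * \<sigma> + 1)] (mod 3 ^ (s + 1))"
    by (rule cong_mult[OF h cong_refl])
  finally have "[2 * y - 1 = 3 * \<sigma>] (mod 3 ^ (s + 1))"
    using cong_diff[OF _ cong_refl, of _ _ _ 1] by fastforce
  then obtain q where q: "2 * y - 1 - 3 * \<sigma> = 3 ^ (s + 1) * q"
    by (metis cong_iff_dvd_diff dvdE)
  define y' where "y' = \<sigma> + 3 ^ s * q"
  have y'y: "3 * y' = 2 * y - 1" using q unfolding y'_def by (simp add: algebra_simps)
  then have "merge x y'"
    using merge_preimage[OF y(2), of 1] collatzT_odd_preimage by simp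
  moreover have "y' > 0" using y'y y(1) by linarith
  moreover have "[y' = \<sigma>] (mod 3 ^ s)" unfolding y'_def by (simp add: cong_iff_dvd_diff)
  moreover have "[y' = r'] (mod e)"
  proof -
    have "[3 * y' = 2 * r - 1] (mod e)" using y'y y(3) by (simp add: cong_mult cong_diff)
    then have "[3 * y' = 3 * r'] (mod e)" using assms(2) cong_sym cong_trans by metis
    then show ?thesis using cong_mult_lcancel assms(3) by blast
  qed
  ultimately show "\<exists>y. y > 0 \<and> merge x y \<and> [y = r'] (mod e) \<and> [y = \<sigma>] (mod 3 ^ s)"
    by blast
qed

(* Iterated odd preimages, expressed through the conjugated form r + 1 -> (2/3)(r + 1). *)
lemma attainable_odd_preimage_iter:
  assumes "coprime 3 e"
  shows "attainable x e r \<Longrightarrow> [3 ^ i * (r' + 1) = 2 ^ i * (r + 1)] (mod e) \<Longrightarrow> attainable x e r'"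
proof (induction i arbitrary: r)
  case 0
  then show ?case using attainable_cong cong_add_rcancel cong_sym by fastforce
next
  case (Suc i)
  obtain i3 where i3: "[3 * i3 = 1] (mod e)" using cong_solve_coprime_int assms by blast
  define r'' where "r'' = i3 * (2 * r - 1)"
  have r'': "[3 * r'' = 2 * r - 1] (mod e)"
    using cong_mult[OF i3 cong_refl, of "2 * r - 1"] unfolding r''_def by (simp add: mult.assoc)
  have "[3 * (3 ^ i * (r' + 1)) = 3 * (2 ^ i * (r'' + 1))] (mod e)"
  proof -
    have "[3 * (3 ^ i * (r' + 1)) = 2 ^ Suc i * (r + 1)] (mod e)"
      using Suc.prems(2) by (simp add: mult.assoc)
    also have "2 ^ Suc i * (r + 1) = 2 ^ i * ((2 * r - 1) + 3)"
      by (simp add: algebra_simps)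
    also have "[2 ^ i * ((2 * r - 1) + 3) = 2 ^ i * (3 * r'' + 3)] (mod e)"
      using r'' by (intro cong_mult cong_add cong_refl) (rule cong_sym)
    also have "2 ^ i * (3 * r'' + 3) = 3 * (2 ^ i * (r'' + 1))"
      by (simp add: algebra_simps)
    finally show ?thesis .
  qed
  then have "[3 ^ i * (r' + 1) = 2 ^ i * (r'' + 1)] (mod e)"
    using cong_mult_lcancel assms by blast
  moreover have "attainable x e r''"
    using attainable_odd_preimage[OF Suc.prems(1) r'' assms] .
  ultimately show ?case using Suc.IH by blast
qed

lemma gadget_preimage:
  assumes Z: "merge x Z" "Z > 0" "[Z = X0] (mod e)" "[Z = 3 ^ n * u - 1] (mod 3 ^ (n + s))"
    and X0: "X0 + 1 = 3 ^ n * u0" and "n \<ge> 1" "coprime 3 e"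
  shows "\<exists>y. y > 0 \<and> merge x y \<and> [y = 2 ^ n * u0 - 1] (mod e) \<and> [y = 2 ^ n * u - 1] (mod 3 ^ s)"
proof -
  obtain t where "Z - (3 ^ n * u - 1) = 3 ^ (n + s) * t"
    using Z(4) by (metis cong_iff_dvd_diff dvdE)
  then have u': "Z + 1 = 3 ^ n * (u + 3 ^ s * t)"
    by (simp add: power_add algebra_simps)
  define y where "y = 2 ^ n * (u + 3 ^ s * t) - 1"
  have "(collatzT ^^ n) y = Z"
    unfolding y_def funpow_collatzT_gadget u'[symmetric] by simp
  then have "merge x y" using merge_preimage Z(1) by blast
  moreover have "y > 0"
  proof -
    have "0 < (3::int) ^ n * (u + 3 ^ s * t)" using u' Z(2) by linarith
    then have "u + 3 ^ s * t > 0" by (simp add: zero_less_mult_iff)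
    moreover have "(2::int) ^ n \<ge> 2" using power_increasing[of 1 n "2::int"] \<open>n \<ge> 1\<close> by simp
    ultimately have "2 * 1 \<le> (2::int) ^ n * (u + 3 ^ s * t)" by (intro mult_mono) auto
    then show ?thesis unfolding y_def by simp
  qed
  moreover have "[y = 2 ^ n * u - 1] (mod 3 ^ s)"
    unfolding y_def by (simp add: cong_iff_dvd_diff algebra_simps)
  moreover have "[y = 2 ^ n * u0 - 1] (mod e)"
  proof -
    have "[3 ^ n * (u + 3 ^ s * t) = 3 ^ n * u0] (mod e)"
      using cong_add[OF Z(3) cong_refl, of 1] u' X0 by simp
    then have "[u + 3 ^ s * t = u0] (mod e)"
      using cong_mult_lcancel \<open>coprime 3 e\<close> by (metis coprime_power_left_iff)
    then show ?thesis unfolding y_def by (intro cong_diff cong_mult cong_refl)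
  qed
  ultimately show ?thesis by blast
qed

(* Some power of 2 times a number prime to 3 is congruent to -1 modulo 3^n
   (2 is a primitive root modulo powers of 3). *)
lemma pow2_times_hits_minus1:
  fixes w :: int assumes "\<not> 3 dvd w" "n \<ge> 1"
  obtains k where "[2 ^ k * w = -1] (mod 3 ^ n)"
proof -
  define X where "X = (if w mod 3 = 2 then w else 2 * w)"
  have "\<not> 3 dvd X" "[X = -1] (mod 3 ^ 1)"
    unfolding X_def using assms(1) by (simp_all add: cong_iff_dvd_diff) presburger+
  then obtain j where "[4 ^ j * X = -1] (mod 3 ^ (1 + (n - 1)))"
    using powers_hit_residues[of 4 1 1 X "-1"] by fastforce
  moreover have "4 ^ j * X = 2 ^ (if w mod 3 = 2 then 2 * j else 2 * j + 1) * w"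
    unfolding X_def by (simp add: power_mult)
  ultimately show ?thesis using that assms(2) by simp
qed

(* Throughout, e is a positive modulus prime to 6; 2 and 3 then have common
   multiplicative order dividing lam = totient e modulo e. *)
locale coprime_to_6 =
  fixes e :: int
  assumes e_pos: "e > 0" and coprime2: "coprime 2 e" and coprime3: "coprime 3 e"
begin

definition lam :: nat where "lam = totient (nat e)"

lemma lam_pos: "lam > 0"
  unfolding lam_def using e_pos by simp

lemma two_pow_lam: "[2 ^ lam = 1] (mod e)"
  using euler_theorem_int[of e 2] e_pos coprime2 unfolding lam_def by simp

lemma three_pow_lam: "[3 ^ lam = 1] (mod e)"
  using euler_theorem_int[of e 3] e_pos coprime3 unfolding lam_def by simp

lemma power_lam: "(b::int) ^ lam = b * b ^ (lam - 1)"
  using lam_pos by (cases lam) simp_all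

(* Inverses of the two basic moves, obtained as their (lam - 1)-fold iterates. *)
lemma attainable_half:
  assumes "attainable x e r" "[2 * r' = r] (mod e)" shows "attainable x e r'"
proof -
  have "[2 * (2 ^ (lam - 1) * r) = r] (mod e)"
    using cong_mult[OF two_pow_lam cong_refl, of r] by (simp only: power_lam mult.assoc mult_1)
  also have "[r = 2 * r'] (mod e)" using assms(2) by (rule cong_sym)
  finally have "[2 ^ (lam - 1) * r = r'] (mod e)"
    using cong_mult_lcancel coprime2 by blast
  then show ?thesis using attainable_cong attainable_pow2 assms(1) by blast
qed

lemma attainable_odd_image:
  assumes "attainable x e r" "[2 * r' = 3 * r + 1] (mod e)" shows "attainable x e r'"
proof -
  have "2 * (3 ^ (lam - 1) * (r' + 1)) = 3 ^ (lam - 1) * (2 * r' + 2)"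
    by (simp add: algebra_simps)
  also have "[3 ^ (lam - 1) * (2 * r' + 2) = 3 ^ (lam - 1) * ((3 * r + 1) + 2)] (mod e)"
    by (intro cong_mult cong_add cong_refl assms(2))
  also have "3 ^ (lam - 1) * ((3 * r + 1) + 2) = 3 ^ lam * (r + 1)"
    by (simp only: power_lam) (simp add: algebra_simps)
  also have "[3 ^ lam * (r + 1) = 2 ^ lam * (r + 1)] (mod e)"
    by (intro cong_mult cong_refl cong_trans[OF three_pow_lam cong_sym[OF two_pow_lam]])
  also have "2 ^ lam * (r + 1) = 2 * (2 ^ (lam - 1) * (r + 1))"
    by (simp only: power_lam mult.assoc)
  finally have "[3 ^ (lam - 1) * (r' + 1) = 2 ^ (lam - 1) * (r + 1)] (mod e)"
    using cong_mult_lcancel[OF coprime2] by blast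
  then show ?thesis
    using attainable_odd_preimage_iter[OF coprime3 assms(1)] by blast
qed

(* Composing the moves: r -> r/4 -> (r/2 - 1)/3 -> (r - 2)/3 -> (r - 1)/2 -> r - 1. *)
lemma attainable_pred:
  assumes "attainable x e r" shows "attainable x e (r - 1)"
proof -
  obtain i2 where i2: "[2 * i2 = 1] (mod e)" using cong_solve_coprime_int coprime2 by blast
  obtain i3 where i3: "[3 * i3 = 1] (mod e)" using cong_solve_coprime_int coprime3 by blast
  have half: "[2 * (i2 * z) = z] (mod e)" for z
    using cong_mult[OF i2 cong_refl, of z] by (simp add: mult.assoc)
  have third: "[3 * (i3 * z) = z] (mod e)" for z
    using cong_mult[OF i3 cong_refl, of z] by (simp add: mult.assoc)
  define q1 where "q1 = i2 * (i2 * r)"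
  define q2 where "q2 = i3 * (2 * q1 - 1)"
  define q3 where "q3 = i2 * (3 * (2 * q2) + 1)"
  have "attainable x e q1"
    unfolding q1_def using attainable_half[OF attainable_half[OF assms half] half] .
  then have "attainable x e q2"
    unfolding q2_def using attainable_odd_preimage third coprime3 by blast
  then have "attainable x e q3"
    unfolding q3_def using attainable_odd_image attainable_double half by blast
  then have "attainable x e (2 * q3)" by (rule attainable_double)
  moreover have "[2 * q3 = r - 1] (mod e)"
  proof -
    define u where "u = 2 * i2"
    define v where "v = 3 * i3"
    have "2 * q3 = u * (v * (u ^ 2 * r - 2) + 1)"
      unfolding q3_def q2_def q1_def u_def v_def by (simp add: power2_eq_square algebra_simps)
    moreover have "[u * (v * (u ^ 2 * r - 2) + 1) = 1 * (1 * (1 ^ 2 * r - 2) + 1)] (mod e)"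
      using i2 i3 unfolding u_def v_def by (intro cong_mult cong_add cong_diff cong_pow cong_refl)
    ultimately show ?thesis by simp
  qed
  ultimately show ?thesis by (rule attainable_cong)
qed

lemma attainable_all:
  assumes "attainable x e r" shows "attainable x e r'"
proof -
  have "attainable x e (r - int k)" for k
    by (induction k) (use assms in \<open>auto dest: attainable_pred simp: algebra_simps\<close>)
  then have "attainable x e (r - (r - r') mod e)"
    using e_pos by (metis int_nat_eq pos_mod_sign)
  moreover have "r - (r - r') mod e - r' = e * ((r - r') div e)"
    using minus_mod_eq_mult_div[of "r - r'" e] by simp
  then have "[r - (r - r') mod e = r'] (mod e)"
    by (simp add: cong_iff_dvd_diff)
  ultimately show ?thesis by (rule attainable_cong)
qed

(* A power g = 2^l that is 1 modulo e and has some exact 3-adic valuation n >= 1;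
   g = 4^lam does, since 4 = 1 (mod 3). *)
lemma power_of_2_lifting_base:
  obtains l n c where "[(2::int) ^ l = 1] (mod e)" "(2::int) ^ l - 1 = 3 ^ n * c" "\<not> 3 dvd c" "n \<ge> 1"
proof -
  have four: "(2::int) ^ (lam * 2) = 4 ^ lam"
    by (simp add: power_mult power_even_eq[symmetric])
  have "(4::int) ^ lam > 4 ^ 0" using lam_pos by (intro power_strict_increasing) auto
  then obtain n c where nc: "(4::int) ^ lam - 1 = 3 ^ n * c" "\<not> 3 dvd c" "c > 0"
    using prime_power_decompose[of 3 "4 ^ lam - 1"] by auto
  have "[(4::int) ^ lam = 1 ^ lam] (mod 3)" by (intro cong_pow) (simp add: cong_iff_dvd_diff)
  then have "3 dvd (4::int) ^ lam - 1" by (simp add: cong_iff_dvd_diff)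
  then have "n \<ge> 1" using nc by (cases n) auto
  moreover have "[(2::int) ^ (lam * 2) = 1] (mod e)"
    using cong_pow[OF two_pow_lam, of 2] by (simp add: power_mult)
  ultimately show ?thesis using that[of "lam * 2"] nc four by simp
qed

(* Some residue is attainable: choose w in the orbit of x prime to 3 and a power of 2
   with X0 = 2^k0 w = -1 (mod 3^n).  For g = 2^l as above, the numbers g^j X0 merge
   with x, stay congruent to X0 modulo e, and run through all classes = -1 modulo 3^n
   modulo 3^(n+s); the gadget then gives a preimage with arbitrary class modulo 3^s. *)
lemma attainable_exists:
  assumes "x > 0" shows "\<exists>r. attainable x e r"
proof -
  obtain i0 where w3: "\<not> 3 dvd (collatzT ^^ i0) x" using exists_iterate_not_dvd3[OF assms] by blast
  define w where "w = (collatzT ^^ i0) x"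
  have w: "\<not> 3 dvd w" "w > 0" "\<And>k. merge x (2 ^ k * w)"
    using w3 funpow_collatzT_pos[OF assms] merge_pow2[OF merge_orbit] unfolding w_def by blast+
  obtain l n c where g_mod_e: "[(2::int) ^ l = 1] (mod e)"
    and g3: "(2::int) ^ l - 1 = 3 ^ n * c" "\<not> 3 dvd c" "n \<ge> 1"
    using power_of_2_lifting_base by blast
  define g :: int where "g = 2 ^ l"
  have g_pow2: "g ^ j = 2 ^ (l * j)" for j
    unfolding g_def by (simp add: power_mult)
  obtain k0 where k0: "[2 ^ k0 * w = -1] (mod 3 ^ n)" using pow2_times_hits_minus1 w(1) g3(3) by blast
  define X0 where "X0 = 2 ^ k0 * w"
  obtain u0 where u0: "X0 + 1 = 3 ^ n * u0"
    using k0 unfolding X0_def by (metis cong_iff_dvd_diff diff_minus_eq_add dvdE)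
  have "attainable x e (2 ^ n * u0 - 1)"
    unfolding attainable_def
  proof (intro allI)
    fix s :: nat and \<sigma> :: int
    have "coprime ((2::int) ^ n) (3 ^ s)" by simp
    then obtain h :: int where h: "[2 ^ n * h = 1] (mod 3 ^ s)"
      using cong_solve_coprime_int by blast
    define u where "u = h * (\<sigma> + 1)"
    have "\<not> 3 dvd X0" unfolding X0_def using w(1) not_dvd3_mult prime_dvd_power[of "3::int" 2 k0] by auto
    moreover have "X0 - (3 ^ n * u - 1) = 3 ^ n * (u0 - u)"
      using u0 by (simp add: algebra_simps)
    then have "[X0 = 3 ^ n * u - 1] (mod 3 ^ n)"
      by (simp add: cong_iff_dvd_diff)
    ultimately obtain j where j: "[g ^ j * X0 = 3 ^ n * u - 1] (mod 3 ^ (n + s))"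
      using powers_hit_residues[OF g3[folded g_def]] by blast
    have "merge x (g ^ j * X0)" "g ^ j * X0 > 0"
      unfolding g_pow2 X0_def using w(2) w(3)[of "l * j + k0"] by (simp_all add: power_add mult.assoc)
    moreover have "[g ^ j * X0 = X0] (mod e)"
      using cong_mult[OF cong_pow[OF g_mod_e[folded g_def]] cong_refl, of j X0] by simp
    ultimately obtain y where y: "y > 0" "merge x y" "[y = 2 ^ n * u0 - 1] (mod e)"
        "[y = 2 ^ n * u - 1] (mod 3 ^ s)"
      using gadget_preimage[OF _ _ _ j u0 g3(3) coprime3] by blast
    have "[2 ^ n * u - 1 = 1 * (\<sigma> + 1) - 1] (mod 3 ^ s)"
      unfolding u_def mult.assoc[symmetric] using h by (intro cong_diff cong_mult cong_refl)
    then have "[y = \<sigma>] (mod 3 ^ s)" using cong_trans[OF y(4)] by simp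
    then show "\<exists>y. y > 0 \<and> merge x y \<and> [y = 2 ^ n * u0 - 1] (mod e) \<and> [y = \<sigma>] (mod 3 ^ s)"
      using y by blast
  qed
  then show ?thesis by blast
qed

end

lemma merge_residue:
  fixes D b :: int
  assumes "x > 0" "D > 0" "odd D"
  shows "\<exists>y. y > 0 \<and> merge x y \<and> [y = b] (mod D)"
proof -
  obtain t e where D: "D = 3 ^ t * e" "\<not> 3 dvd e" "e > 0"
    using prime_power_decompose[of 3 D] assms(2) by auto
  have "odd e" using assms(3) D(1) by simp
  then have "coprime 2 e" "coprime 3 e"
    using D(2) by (simp_all add: prime_imp_coprime)
  then interpret coprime_to_6 e using D(3) by unfold_locales
  obtain r where "attainable x e r" using attainable_exists[OF assms(1)] by blast
  then have "attainable x e b" by (rule attainable_all)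
  then obtain y where y: "y > 0" "merge x y" "[y = b] (mod e)" "[y = b] (mod 3 ^ t)"
    unfolding attainable_def by blast
  have "[y = b] (mod 3 ^ t * e)"
    using coprime_cong_mult[OF y(4) y(3)] coprime3 by simp
  then show ?thesis using y(1,2) D(1) by blast
qed

lemma cong_above_progression:
  fixes y b D :: int
  assumes "y \<ge> b" "[y = b] (mod D)" "D > 0"
  obtains N :: nat where "y = b + D * int N"
proof -
  obtain q where q: "y - b = D * q" using assms(2) by (metis cong_iff_dvd_diff cong_sym dvdE)
  then have "D * q \<ge> 0" using assms(1) by linarith
  then have "q \<ge> 0" using assms(3) by (simp add: zero_le_mult_iff)
  then show ?thesis using that[of "nat q"] q by simp
qed

(* Multiplying by a power of 2 that is 1 modulo D makes the merging number large, so
   x merges with a member of every progression b + D N with odd difference D. *)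
lemma merge_progression:
  fixes D b :: int
  assumes "x > 0" "D > 0" "odd D"
  shows "\<exists>N::nat. merge x (b + D * int N)"
proof -
  obtain y where y: "y > 0" "merge x y" "[y = b] (mod D)"
    using merge_residue[OF assms] by blast
  define L where "L = totient (nat D)"
  define K where "K = nat b"
  have "L > 0" unfolding L_def using assms(2) by simp
  have "coprime (int 2) D" using assms(3) by (simp add: prime_imp_coprime)
  then have "[2 ^ L = 1] (mod D)"
    using euler_theorem_int[OF assms(2)] unfolding L_def by (metis of_nat_numeral)
  then have "[2 ^ (L * K) * y = 1 * y] (mod D)"
    unfolding power_mult by (intro cong_mult cong_refl) (metis cong_pow power_one)
  then have "[2 ^ (L * K) * y = b] (mod D)" using y(3) cong_trans by simp
  moreover have "b \<le> 2 ^ (L * K) * y"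
  proof -
    have "b \<le> int K" unfolding K_def by simp
    also have "\<dots> < 2 ^ K" by (metis of_nat_less_iff of_nat_numeral of_nat_power less_exp)
    also have "\<dots> \<le> 2 ^ (L * K)" using \<open>L > 0\<close> by (intro power_increasing) auto
    also have "\<dots> \<le> 2 ^ (L * K) * y" using y(1) by simp
    finally show ?thesis by simp
  qed
  ultimately obtain N where "2 ^ (L * K) * y = b + D * int N"
    using cong_above_progression assms(2) by blast
  then show ?thesis using merge_pow2[OF y(2)] by metis
qed

theorem mainTheorem1:
  fixes f :: "nat \<Rightarrow> nat" and a d :: int
  assumes "a > 0" and "d > 0"
  shows "sufficient {2 ^ f n * (a + d * int n) | n. True}"
  unfolding sufficient_def
proof (intro conjI ballI allI impI)
  fix z assume "z \<in> {2 ^ f n * (a + d * int n) | n. True}"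
  then obtain n where "z = 2 ^ f n * (a + d * int n)" by blast
  then show "z > 0" using assms by (simp add: add_pos_nonneg)
next
  fix x :: int assume "x > 0"
  obtain s d' where d: "d = 2 ^ s * d'" "odd d'" "d' > 0"
    using prime_power_decompose[of 2 d] assms(2) by auto
  obtain m where m: "\<And>q. (collatzT ^^ s) (a + 2 ^ s * q) = (collatzT ^^ s) a + 3 ^ m * q"
    using funpow_collatzT_shift by blast
  obtain N :: nat where N: "merge x ((collatzT ^^ s) a + 3 ^ m * d' * int N)"
    using merge_progression[OF \<open>x > 0\<close>, of "3 ^ m * d'"] d(2,3) by auto
  have "(collatzT ^^ s) (a + d * int N) = (collatzT ^^ s) a + 3 ^ m * d' * int N"
    using m[of "d' * int N"] d(1) by (simp add: mult.assoc)
  then have "merge x (2 ^ f N * (a + d * int N))"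
    using merge_pow2 merge_preimage N by blast
  then show "\<exists>z\<in>{2 ^ f n * (a + d * int n) | n. True}. merge x z" by blast
qed

end
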